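(* The category $\mathcal J$ is isomorphic to Quillen's localization construction $\Sigma^{-1}\Sigma$ on the category $\Sigma$ of finite sets and bijections.
   Context: $\mathcal J$ is the category whose objects are pairs $(\mathbf n_1,\mathbf n_2)$ of finite sets $\mathbf n_i=\{1,\dots,n_i\}$, $n_i\ge0$. A morphism $(\mathbf m_1,\mathbf m_2)\to(\mathbf n_1,\mathbf n_2)$ is a triple $(\beta_1,\beta_2,\sigma)$ with $\beta_i\colon\mathbf m_i\to\mathbf n_i$ injective maps and $\sigma\colon\mathbf n_1\setminus\beta_1(\mathbf m_1)\to\mathbf n_2\setminus\beta_2(\mathbf m_2)$ a bijection. The composite of $(\alpha_1,\alpha_2,\rho)\colon(\mathbf l_1,\mathbf l_2)\to(\mathbf m_1,\mathbf m_2)$ and $(\beta_1,\beta_2,\sigma)$ is $(\beta_1\alpha_1,\beta_2\alpha_2,\tau)$ where $\tau(s)=\sigma(s)$ for $s\in\mathbf n_1\setminus\beta_1(\mathbf m_1)$ and $\tau(\beta_1(t))=\beta_2(\rho(t))$ for $t\in\mathbf m_1\setminus\alpha_1(\mathbf l_1)$. $\Sigma$ is the category with objects $\mathbf n$, $n\ge 0$, and bijections as morphisms, symmetric monoidal under concatenation $\sqcup$. $\Sigma^{-1}\Sigma$ (using the monoidal right action of $\Sigma$ on itself) has objects pairs $(\mathbf n_1,\mathbf n_2)$ of objects of $\Sigma$; a morphism $(\mathbf m_1,\mathbf m_2)\to(\mathbf n_1,\mathbf n_2)$ is an isomorphism class of pairs $(\mathbf l,(\alpha_1,\alpha_2))$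 with $\mathbf l$ an object of $\Sigma$ and $\alpha_i\colon\mathbf m_i\sqcup\mathbf l\to\mathbf n_i$ bijections, where $(\mathbf l,(\alpha_1,\alpha_2))\sim(\mathbf l,(\alpha_1',\alpha_2'))$ if there is $\sigma\in\Sigma(\mathbf l,\mathbf l)$ with $\alpha_i'\circ(1_{\mathbf m_i}\sqcup\sigma)=\alpha_i$ for $i=1,2$; composition of $[\mathbf l,(\alpha_1,\alpha_2)]$ followed by $[\mathbf l',(\beta_1,\beta_2)]$ is $[\mathbf l\sqcup\mathbf l',(\beta_i\circ(\alpha_i\sqcup 1_{\mathbf l'}))_i]$. *)

theory Defs
  imports "HOL-Library.FuncSet"
begin

text \<open>Comp C x y z f g is the composite "g after f" of
f : x \<rightarrow> y and g : y \<rightarrow> z.\<close>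

record ('o, 'm) cat =
  Ob   :: "'o set"
  Hom  :: "'o \<Rightarrow> 'o \<Rightarrow> 'm set"
  Id   :: "'o \<Rightarrow> 'm"
  Comp :: "'o \<Rightarrow> 'o \<Rightarrow> 'o \<Rightarrow> 'm \<Rightarrow> 'm \<Rightarrow> 'm"

definition is_functor ::
  "('o, 'm) cat \<Rightarrow> ('p, 'n) cat \<Rightarrow> ('o \<Rightarrow> 'p) \<Rightarrow> ('o \<Rightarrow> 'o \<Rightarrow> 'm \<Rightarrow> 'n) \<Rightarrow> bool" where
  "is_functor C D Fo Fm \<longleftrightarrow>
     (\<forall>x\<in>Ob C. Fo x \<in> Ob D) \<and>
     (\<forall>x\<in>Ob C. \<forall>y\<in>Ob C. \<forall>f\<in>Hom C x y. Fm x y f \<in> Hom D (Fo x) (Fo y)) \<and>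
     (\<forall>x\<in>Ob C. Fm x x (Id C x) = Id D (Fo x)) \<and>
     (\<forall>x\<in>Ob C. \<forall>y\<in>Ob C. \<forall>z\<in>Ob C. \<forall>f\<in>Hom C x y. \<forall>g\<in>Hom C y z.
        Fm x z (Comp C x y z f g) = Comp D (Fo x) (Fo y) (Fo z) (Fm x y f) (Fm y z g))"

definition cat_isomorphic :: "('o, 'm) cat \<Rightarrow> ('p, 'n) cat \<Rightarrow> bool" where
  "cat_isomorphic C D \<longleftrightarrow>
     (\<exists>Fo Fm Go Gm. is_functor C D Fo Fm \<and> is_functor D C Go Gm \<and>
        (\<forall>x\<in>Ob C. Go (Fo x) = x) \<and> (\<forall>y\<in>Ob D. Fo (Go y) = y) \<and>
        (\<forall>x\<in>Ob C. \<forall>y\<in>Ob C. \<forall>f\<in>Hom C x y. Gm (Fo x) (Fo y) (Fm x y f) = f) \<and>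
        (\<forall>x\<in>Ob D. \<forall>y\<in>Ob D. \<forall>f\<in>Hom D x y. Fm (Go x) (Go y) (Gm x y f) = f))"

text \<open>The finite set n is {1..n}.  Maps between finite sets are represented by
extensional functions (value undefined outside the domain).\<close>

type_synonym J_mor = "(nat \<Rightarrow> nat) \<times> (nat \<Rightarrow> nat) \<times> (nat \<Rightarrow> nat)"

definition J_hom :: "nat \<times> nat \<Rightarrow> nat \<times> nat \<Rightarrow> J_mor set" where
  "J_hom mm nn = (case mm of (m1, m2) \<Rightarrow> case nn of (n1, n2) \<Rightarrow>
     {(b1, b2, s).
        b1 \<in> extensional {1..m1} \<and> b2 \<in> extensional {1..m2} \<and>
        inj_on b1 {1..m1} \<and> inj_on b2 {1..m2} \<and>
        b1 ` {1..m1} \<subseteq> {1..n1} \<and> b2 ` {1..m2} \<subseteq> {1..n2} \<and>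
        s \<in> extensional ({1..n1} - b1 ` {1..m1}) \<and>
        bij_betw s ({1..n1} - b1 ` {1..m1}) ({1..n2} - b2 ` {1..m2})})"

definition J_id :: "nat \<times> nat \<Rightarrow> J_mor" where
  "J_id nn = (case nn of (n1, n2) \<Rightarrow>
     (restrict id {1..n1}, restrict id {1..n2}, restrict id {}))"

definition J_comp :: "nat \<times> nat \<Rightarrow> nat \<times> nat \<Rightarrow> nat \<times> nat \<Rightarrow> J_mor \<Rightarrow> J_mor \<Rightarrow> J_mor" where
  "J_comp ll mm nn f g = (case ll of (l1, l2) \<Rightarrow> case mm of (m1, m2) \<Rightarrow> case nn of (n1, n2) \<Rightarrow>
     case f of (a1, a2, r) \<Rightarrow> case g of (b1, b2, s) \<Rightarrow>
       (restrict (b1 \<circ> a1) {1..l1}, restrict (b2 \<circ> a2) {1..l2},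
        (\<lambda>x. if x \<in> {1..n1} - b1 ` {1..m1} then s x
             else if x \<in> b1 ` ({1..m1} - a1 ` {1..l1})
               then b2 (r (the_inv_into {1..m1} b1 x))
             else undefined)))"

definition J_cat :: "(nat \<times> nat, J_mor) cat" where
  "J_cat = \<lparr>Ob = UNIV, Hom = J_hom, Id = J_id, Comp = J_comp\<rparr>"

definition bijs :: "nat set \<Rightarrow> nat set \<Rightarrow> (nat \<Rightarrow> nat) set" where
  "bijs A B = {f \<in> extensional A. bij_betw f A B}"

text \<open>Concatenation f \<squnion> g of maps f : m \<rightarrow> m' and g : l \<rightarrow> l' as a map
m \<squnion> l \<rightarrow> m' \<squnion> l' (with m \<squnion> l = {1..m+l}); not restricted here.\<close>

definition tsum :: "nat \<Rightarrow> nat \<Rightarrow> (nat \<Rightarrow> nat) \<Rightarrow> (nat \<Rightarrow> nat) \<Rightarrow> nat \<Rightarrow> nat" where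
  "tsum m m' f g x = (if x \<le> m then f x else m' + g (x - m))"

text \<open>The equivalence class of (l,(a1,a2)), with a_i : m_i \<squnion> l \<rightarrow> n_i bijections:
all (a1',a2') with a_i' \<circ> (1 \<squnion> \<sigma>) = a_i for some \<sigma> \<in> \<Sigma>(l,l).\<close>

definition SS_cls :: "nat \<Rightarrow> nat \<Rightarrow> nat \<Rightarrow> nat \<Rightarrow> nat \<Rightarrow> (nat \<Rightarrow> nat) \<times> (nat \<Rightarrow> nat)
    \<Rightarrow> ((nat \<Rightarrow> nat) \<times> (nat \<Rightarrow> nat)) set" where
  "SS_cls m1 m2 n1 n2 l a =
     {(c1, c2). c1 \<in> bijs {1..m1 + l} {1..n1} \<and> c2 \<in> bijs {1..m2 + l} {1..n2} \<and>
        (\<exists>\<sigma>\<in>bijs {1..l} {1..l}.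
           (\<forall>x\<in>{1..m1 + l}. c1 (tsum m1 m1 id \<sigma> x) = fst a x) \<and>
           (\<forall>x\<in>{1..m2 + l}. c2 (tsum m2 m2 id \<sigma> x) = snd a x))}"

type_synonym SS_mor = "nat \<times> ((nat \<Rightarrow> nat) \<times> (nat \<Rightarrow> nat)) set"

definition SS_hom :: "nat \<times> nat \<Rightarrow> nat \<times> nat \<Rightarrow> SS_mor set" where
  "SS_hom mm nn = (case mm of (m1, m2) \<Rightarrow> case nn of (n1, n2) \<Rightarrow>
     {(l, SS_cls m1 m2 n1 n2 l (a1, a2)) | l a1 a2.
        a1 \<in> bijs {1..m1 + l} {1..n1} \<and> a2 \<in> bijs {1..m2 + l} {1..n2}})"

definition SS_id :: "nat \<times> nat \<Rightarrow> SS_mor" where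
  "SS_id nn = (case nn of (n1, n2) \<Rightarrow>
     (0, SS_cls n1 n2 n1 n2 0 (restrict id {1..n1}, restrict id {1..n2})))"

text \<open>Composition on representatives: [l,(a1,a2)] followed by [l',(b1,b2)] is
[l \<squnion> l', (b_i \<circ> (a_i \<squnion> 1_(l')))].\<close>

definition SS_comp :: "nat \<times> nat \<Rightarrow> nat \<times> nat \<Rightarrow> nat \<times> nat \<Rightarrow> SS_mor \<Rightarrow> SS_mor \<Rightarrow> SS_mor" where
  "SS_comp kk mm nn f g = (case kk of (k1, k2) \<Rightarrow> case mm of (m1, m2) \<Rightarrow> case nn of (n1, n2) \<Rightarrow>
     case f of (l, A) \<Rightarrow> case g of (l', B) \<Rightarrow>
       (let a = (SOME a. a \<in> A); b = (SOME b. b \<in> B) in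
        (l + l', SS_cls k1 k2 n1 n2 (l + l')
           (restrict (fst b \<circ> tsum (k1 + l) m1 (fst a) id) {1..k1 + l + l'},
            restrict (snd b \<circ> tsum (k2 + l) m2 (snd a) id) {1..k2 + l + l'}))))"

definition SS_cat :: "(nat \<times> nat, SS_mor) cat" where
  "SS_cat = \<lparr>Ob = UNIV, Hom = SS_hom, Id = SS_id, Comp = SS_comp\<rparr>"

end

theory Submission
  imports Defs
begin

text \<open>
A representative (l, (a1, a2)) of a morphism (m1, m2) \<rightarrow> (n1, n2) of \<Sigma>\<inverse>\<Sigma> determines the
J-morphism (a1|m1, a2|m2, \<sigma>) with \<sigma> (a1 (m1 + j)) = a2 (m2 + j): the two copies of l are glued
together.  Representatives differing by a permutation of l give the same triple, and conversely
two representatives with the same triple differ by the permutation that matches their tails.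
Every J-morphism arises by enumerating the complement of the image of \<beta>1.  Concatenating the
tails of two composable representatives is exactly the composition rule of J, so this is an
identity-on-objects functor \<Sigma>\<inverse>\<Sigma> \<rightarrow> J that is bijective on hom-sets, hence an isomorphism.
\<close>

section \<open>Isomorphisms induced by functors bijective on hom-sets\<close>

lemma cat_isomorphicI_bij_on_homs:
  fixes C :: "('o, 'm) cat" and D :: "('o, 'n) cat"
  assumes G: "is_functor D C (\<lambda>x. x) Gm" and ob: "Ob C = Ob D"
    and bij: "\<And>x y. x \<in> Ob D \<Longrightarrow> y \<in> Ob D \<Longrightarrow> bij_betw (Gm x y) (Hom D x y) (Hom C x y)"
    and comp_closed: "\<And>x y z f g. x \<in> Ob D \<Longrightarrow> y \<in> Ob D \<Longrightarrow> z \<in> Ob D \<Longrightarrow>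
       f \<in> Hom D x y \<Longrightarrow> g \<in> Hom D y z \<Longrightarrow> Comp D x y z f g \<in> Hom D x z"
    and id_closed: "\<And>x. x \<in> Ob D \<Longrightarrow> Id D x \<in> Hom D x x"
  shows "cat_isomorphic C D"
proof -
  define Fm where "Fm x y = inv_into (Hom D x y) (Gm x y)" for x y
  have FG: "Fm x y (Gm x y f) = f" if "x \<in> Ob D" "y \<in> Ob D" "f \<in> Hom D x y" for x y f
    using bij[OF that(1,2)] that(3) by (simp add: Fm_def bij_betw_inv_into_left)
  have GF: "Gm x y (Fm x y f) = f" if "x \<in> Ob D" "y \<in> Ob D" "f \<in> Hom C x y" for x y f
    using bij[OF that(1,2)] that(3) by (simp add: Fm_def bij_betw_inv_into_right)
  have F_hom: "Fm x y f \<in> Hom D x y" if "x \<in> Ob D" "y \<in> Ob D" "f \<in> Hom C x y" for x y f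
    using bij_betw_inv_into[OF bij[OF that(1,2)]] that(3) by (simp add: Fm_def bij_betw_apply)
  have G_id: "\<And>x. x \<in> Ob D \<Longrightarrow> Gm x x (Id D x) = Id C x"
    and G_comp: "\<And>x y z f g. x \<in> Ob D \<Longrightarrow> y \<in> Ob D \<Longrightarrow> z \<in> Ob D \<Longrightarrow>
       f \<in> Hom D x y \<Longrightarrow> g \<in> Hom D y z \<Longrightarrow>
       Gm x z (Comp D x y z f g) = Comp C x y z (Gm x y f) (Gm y z g)"
    using G unfolding is_functor_def by auto
  have F: "is_functor C D (\<lambda>x. x) Fm"
    unfolding is_functor_def
  proof (intro conjI ballI)
    fix x assume "x \<in> Ob C"
    then show "x \<in> Ob D" and "Fm x x (Id C x) = Id D x"
      using ob G_id FG id_closed by (simp_all flip: G_id)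
  next
    fix x y f assume "x \<in> Ob C" "y \<in> Ob C" "f \<in> Hom C x y"
    then show "Fm x y f \<in> Hom D x y" using F_hom ob by simp
  next
    fix x y z f g
    assume xyz: "x \<in> Ob C" "y \<in> Ob C" "z \<in> Ob C" and fg: "f \<in> Hom C x y" "g \<in> Hom C y z"
    then have "Comp C x y z f g = Gm x z (Comp D x y z (Fm x y f) (Fm y z g))"
      using ob GF G_comp F_hom by simp
    then show "Fm x z (Comp C x y z f g) = Comp D x y z (Fm x y f) (Fm y z g)"
      using xyz fg ob FG comp_closed F_hom by simp
  qed
  show ?thesis
    unfolding cat_isomorphic_def using F G ob FG GF F_hom by (intro exI[of _ "\<lambda>x. x"] exI) auto
qed

lemma bijs_bij_betw: "f \<in> bijs A B \<Longrightarrow> bij_betw f A B"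
  by (simp add: bijs_def)

lemma bijs_same_card: "f \<in> bijs {1..p} {1..q} \<Longrightarrow> p = q"
  using bij_betw_same_card by (fastforce simp: bijs_def)

lemma restrict_id_bijs: "restrict id {1..n} \<in> bijs {1..n} {1..n}"
  by (simp add: bijs_def bij_betw_def)

lemma bij_betw_tsum:
  fixes f g :: "nat \<Rightarrow> nat"
  assumes f: "bij_betw f {1..p} X" and g: "bij_betw g {1..q} Y" and disj: "X \<inter> (+) r ` Y = {}"
  shows "bij_betw (tsum p r f g) {1..p+q} (X \<union> (+) r ` Y)"
proof -
  have head: "bij_betw (tsum p r f g) {1..p} X"
    using f by (rule bij_betw_cong[THEN iffD1, rotated]) (simp add: tsum_def)
  have "bij_betw (\<lambda>x. x - p) {p+1..p+q} {1..q}"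
    by (rule bij_betw_byWitness[where f' = "(+) p"]) auto
  then have "bij_betw ((+) r \<circ> g \<circ> (\<lambda>x. x - p)) {p+1..p+q} ((+) r ` Y)"
    using g by (intro bij_betw_trans) auto
  then have tail: "bij_betw (tsum p r f g) {p+1..p+q} ((+) r ` Y)"
    by (rule bij_betw_cong[THEN iffD1, rotated]) (simp add: tsum_def)
  have "{1..p+q} = {1..p} \<union> {p+1..p+q}" by auto
  then show ?thesis using bij_betw_combine[OF head tail disj] by simp
qed

lemma bij_betw_tail:
  fixes m l n :: nat
  assumes a: "bij_betw a {1..m+l} {1..n}"
  shows "bij_betw (\<lambda>j. a (m+j)) {1..l} ({1..n} - a ` {1..m})"
proof -
  have split: "{m+1..m+l} = {1..m+l} - {1..m}" by auto
  have "a ` {m+1..m+l} = a ` {1..m+l} - a ` {1..m}"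
    unfolding split using a by (intro inj_on_image_set_diff) (auto simp: bij_betw_def)
  then have "bij_betw a {m+1..m+l} ({1..n} - a ` {1..m})"
    by (intro bij_betw_subset[OF a]) (use a in \<open>auto simp: bij_betw_def\<close>)
  moreover have "bij_betw ((+) m) {1..l} {m+1..m+l}" by (simp add: add.commute)
  ultimately have "bij_betw (a \<circ> (+) m) {1..l} ({1..n} - a ` {1..m})"
    by (rule bij_betw_trans[rotated])
  then show ?thesis by (simp add: comp_def)
qed

section \<open>The J-morphism determined by a representative\<close>

definition compl_bij :: "nat \<Rightarrow> nat \<Rightarrow> nat \<Rightarrow> nat \<Rightarrow> (nat \<Rightarrow> nat) \<Rightarrow> (nat \<Rightarrow> nat) \<Rightarrow> nat \<Rightarrow> nat" where
  "compl_bij m1 m2 n1 l a1 a2 y =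
     (if y \<in> {1..n1} - a1 ` {1..m1} then a2 (m2 + (the_inv_into {1..m1+l} a1 y - m1)) else undefined)"

lemma compl_bij_extensional: "compl_bij m1 m2 n1 l a1 a2 \<in> extensional ({1..n1} - a1 ` {1..m1})"
  by (simp add: compl_bij_def extensional_def)

lemma compl_bij_tail:
  assumes a1: "bij_betw a1 {1..m1+l} {1..n1}" and j: "j \<in> {1..l}"
  shows "compl_bij m1 m2 n1 l a1 a2 (a1 (m1+j)) = a2 (m2+j)"
proof -
  have "a1 (m1+j) \<in> {1..n1} - a1 ` {1..m1}"
    using bij_betw_apply[OF bij_betw_tail[OF a1] j] by simp
  moreover have "the_inv_into {1..m1+l} a1 (a1 (m1+j)) = m1 + j"
    using a1 j by (intro the_inv_into_f_f) (auto simp: bij_betw_def)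
  ultimately show ?thesis by (simp add: compl_bij_def)
qed

lemma compl_bij_unique:
  assumes a1: "bij_betw a1 {1..m1+l} {1..n1}"
    and g: "g \<in> extensional ({1..n1} - a1 ` {1..m1})"
    and tail: "\<And>j. j \<in> {1..l} \<Longrightarrow> g (a1 (m1+j)) = a2 (m2+j)"
  shows "compl_bij m1 m2 n1 l a1 a2 = g"
proof (rule extensionalityI[OF compl_bij_extensional g])
  fix y assume "y \<in> {1..n1} - a1 ` {1..m1}"
  then obtain j where "j \<in> {1..l}" "y = a1 (m1+j)"
    using bij_betw_imp_surj_on[OF bij_betw_tail[OF a1]] by blast
  then show "compl_bij m1 m2 n1 l a1 a2 y = g y" using compl_bij_tail[OF a1] tail by simp
qed

lemma bij_betw_compl_bij:
  assumes a1: "bij_betw a1 {1..m1+l} {1..n1}" and a2: "bij_betw a2 {1..m2+l} {1..n2}"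
  shows "bij_betw (compl_bij m1 m2 n1 l a1 a2) ({1..n1} - a1 ` {1..m1}) ({1..n2} - a2 ` {1..m2})"
proof -
  have "bij_betw (compl_bij m1 m2 n1 l a1 a2 \<circ> (\<lambda>j. a1 (m1+j))) {1..l} ({1..n2} - a2 ` {1..m2})"
    using bij_betw_tail[OF a2] by (rule bij_betw_cong[THEN iffD2, rotated])
      (simp add: compl_bij_tail[OF a1])
  then show ?thesis using bij_betw_comp_iff[OF bij_betw_tail[OF a1]] by blast
qed

definition J_of_rep :: "nat \<Rightarrow> nat \<Rightarrow> nat \<Rightarrow> nat \<Rightarrow> (nat \<Rightarrow> nat) \<times> (nat \<Rightarrow> nat) \<Rightarrow> J_mor" where
  "J_of_rep m1 m2 n1 l a =
     (restrict (fst a) {1..m1}, restrict (snd a) {1..m2}, compl_bij m1 m2 n1 l (fst a) (snd a))"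

lemma J_of_rep_in_J_hom:
  assumes a1: "a1 \<in> bijs {1..m1+l} {1..n1}" and a2: "a2 \<in> bijs {1..m2+l} {1..n2}"
  shows "J_of_rep m1 m2 n1 l (a1, a2) \<in> J_hom (m1, m2) (n1, n2)"
proof -
  have "inj_on a1 {1..m1}" "a1 ` {1..m1} \<subseteq> {1..n1}"
    using bijs_bij_betw[OF a1] by (auto simp: bij_betw_def intro: inj_on_subset)
  moreover have "inj_on a2 {1..m2}" "a2 ` {1..m2} \<subseteq> {1..n2}"
    using bijs_bij_betw[OF a2] by (auto simp: bij_betw_def intro: inj_on_subset)
  ultimately show ?thesis
    using bij_betw_compl_bij[OF a1[THEN bijs_bij_betw] a2[THEN bijs_bij_betw]]
      compl_bij_extensional[of m1 m2 n1 l a1 a2]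
    by (simp add: J_of_rep_def J_hom_def)
qed

lemma card_compl_image:
  fixes m n :: nat
  assumes "inj_on b {1..m}" and "b ` {1..m} \<subseteq> {1..n}"
  shows "card ({1..n} - b ` {1..m}) + m = n"
proof -
  have "card (b ` {1..m}) = m" using card_image[OF assms(1)] by simp
  moreover have "card (b ` {1..m}) \<le> n" using card_mono[OF _ assms(2)] by simp
  ultimately show ?thesis using card_Diff_subset[OF _ assms(2)] by simp
qed

lemma J_hom_obtain_rep:
  assumes "h \<in> J_hom (m1, m2) (n1, n2)"
  obtains l a1 a2 where "a1 \<in> bijs {1..m1+l} {1..n1}" "a2 \<in> bijs {1..m2+l} {1..n2}"
    "h = J_of_rep m1 m2 n1 l (a1, a2)"
proof -
  obtain b1 b2 s where h: "h = (b1, b2, s)" by (cases h)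
  let ?C1 = "{1..n1} - b1 ` {1..m1}" and ?C2 = "{1..n2} - b2 ` {1..m2}"
  have ext1: "b1 \<in> extensional {1..m1}" and ext2: "b2 \<in> extensional {1..m2}"
    and inj1: "inj_on b1 {1..m1}" and inj2: "inj_on b2 {1..m2}"
    and im1: "b1 ` {1..m1} \<subseteq> {1..n1}" and im2: "b2 ` {1..m2} \<subseteq> {1..n2}"
    and ext_s: "s \<in> extensional ?C1" and s: "bij_betw s ?C1 ?C2"
    using assms unfolding h J_hom_def by auto
  define l where "l = card ?C1"
  have n1: "n1 = m1 + l" and n2: "n2 = m2 + l"
    using card_compl_image[OF inj1 im1] card_compl_image[OF inj2 im2] bij_betw_same_card[OF s]
    by (simp_all add: l_def)
  obtain e where e: "bij_betw e {1..l} ?C1"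
    using ex_bij_betw_nat_finite_1[of ?C1] by (auto simp: l_def)
  define a1 where "a1 = restrict (tsum m1 0 b1 e) {1..m1+l}"
  define a2 where "a2 = restrict (tsum m2 0 b2 (s \<circ> e)) {1..m2+l}"
  have "bij_betw (tsum m1 0 b1 e) {1..m1+l} (b1 ` {1..m1} \<union> (+) 0 ` ?C1)"
    using inj1 e by (intro bij_betw_tsum) (auto simp: bij_betw_def)
  then have a1: "a1 \<in> bijs {1..m1+l} {1..n1}"
    using im1 by (simp add: a1_def bijs_def Un_absorb1 Un_Diff_cancel)
  have "bij_betw (tsum m2 0 b2 (s \<circ> e)) {1..m2+l} (b2 ` {1..m2} \<union> (+) 0 ` ?C2)"
    using inj2 bij_betw_trans[OF e s] by (intro bij_betw_tsum) (auto simp: bij_betw_def)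
  then have a2: "a2 \<in> bijs {1..m2+l} {1..n2}"
    using im2 by (simp add: a2_def bijs_def Un_absorb1 Un_Diff_cancel)
  have "restrict a1 {1..m1} = b1" "restrict a2 {1..m2} = b2"
    using ext1 ext2 by (auto simp: a1_def a2_def tsum_def extensional_def fun_eq_iff)
  moreover have "compl_bij m1 m2 n1 l a1 a2 = s"
  proof (rule compl_bij_unique[OF bijs_bij_betw[OF a1]])
    have "a1 ` {1..m1} = b1 ` {1..m1}" by (auto simp: a1_def tsum_def)
    then show "s \<in> extensional ({1..n1} - a1 ` {1..m1})" using ext_s by simp
    show "s (a1 (m1+j)) = a2 (m2+j)" if "j \<in> {1..l}" for j
      using that by (simp add: a1_def a2_def tsum_def)
  qed
  ultimately show ?thesis using that[OF a1 a2] by (simp add: h J_of_rep_def)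
qed

section \<open>Representatives of the same morphism\<close>

lemma tsum_id_eq_iff:
  fixes m l :: nat
  shows "(\<forall>x\<in>{1..m+l}. c (tsum m m id \<sigma> x) = a x) \<longleftrightarrow>
     (\<forall>x\<in>{1..m}. c x = a x) \<and> (\<forall>j\<in>{1..l}. c (m + \<sigma> j) = a (m+j))"
    (is "?lhs \<longleftrightarrow> ?head \<and> ?tail")
proof
  assume lhs: ?lhs
  have "c x = a x" if "x \<in> {1..m}" for x using lhs[rule_format, of x] that by (simp add: tsum_def)
  moreover have "c (m + \<sigma> j) = a (m+j)" if "j \<in> {1..l}" for j
    using lhs[rule_format, of "m+j"] that by (simp add: tsum_def)
  ultimately show "?head \<and> ?tail" by blast
next
  assume ht: "?head \<and> ?tail"
  show ?lhs
  proof
    fix x assume x: "x \<in> {1..m+l}"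
    show "c (tsum m m id \<sigma> x) = a x"
    proof (cases "x \<le> m")
      case False
      then have "x - m \<in> {1..l}" "x = m + (x - m)" using x by auto
      then show ?thesis using ht False by (metis tsum_def)
    qed (use ht x in \<open>simp add: tsum_def\<close>)
  qed
qed

lemma SS_cls_iff:
  "(c1, c2) \<in> SS_cls m1 m2 n1 n2 l (a1, a2) \<longleftrightarrow>
     c1 \<in> bijs {1..m1+l} {1..n1} \<and> c2 \<in> bijs {1..m2+l} {1..n2} \<and>
     (\<forall>x\<in>{1..m1}. c1 x = a1 x) \<and> (\<forall>x\<in>{1..m2}. c2 x = a2 x) \<and>
     (\<exists>\<sigma>\<in>bijs {1..l} {1..l}.
        \<forall>j\<in>{1..l}. c1 (m1 + \<sigma> j) = a1 (m1+j) \<and> c2 (m2 + \<sigma> j) = a2 (m2+j))"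
  unfolding SS_cls_def tsum_id_eq_iff by auto

lemma J_of_rep_eq_if_SS_cls:
  assumes a1: "bij_betw a1 {1..m1+l} {1..n1}" and c: "(c1, c2) \<in> SS_cls m1 m2 n1 n2 l (a1, a2)"
  shows "J_of_rep m1 m2 n1 l (c1, c2) = J_of_rep m1 m2 n1 l (a1, a2)"
proof -
  obtain \<sigma> where c1: "c1 \<in> bijs {1..m1+l} {1..n1}"
    and head1: "\<forall>x\<in>{1..m1}. c1 x = a1 x" and head2: "\<forall>x\<in>{1..m2}. c2 x = a2 x"
    and \<sigma>: "\<sigma> \<in> bijs {1..l} {1..l}"
    and tail: "\<forall>j\<in>{1..l}. c1 (m1 + \<sigma> j) = a1 (m1+j) \<and> c2 (m2 + \<sigma> j) = a2 (m2+j)"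
    using c unfolding SS_cls_iff by blast
  have "compl_bij m1 m2 n1 l a1 a2 = compl_bij m1 m2 n1 l c1 c2"
  proof (rule compl_bij_unique[OF a1])
    have "c1 ` {1..m1} = a1 ` {1..m1}" using head1 by simp
    then show "compl_bij m1 m2 n1 l c1 c2 \<in> extensional ({1..n1} - a1 ` {1..m1})"
      using compl_bij_extensional[of m1 m2 n1 l c1 c2] by simp
    fix j assume j: "j \<in> {1..l}"
    then have "\<sigma> j \<in> {1..l}" using bij_betw_apply[OF bijs_bij_betw[OF \<sigma>]] by blast
    then have "compl_bij m1 m2 n1 l c1 c2 (c1 (m1 + \<sigma> j)) = c2 (m2 + \<sigma> j)"
      by (rule compl_bij_tail[OF bijs_bij_betw[OF c1]])
    then show "compl_bij m1 m2 n1 l c1 c2 (a1 (m1+j)) = a2 (m2+j)"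
      using tail j by simp
  qed
  moreover have "restrict c1 {1..m1} = restrict a1 {1..m1}" "restrict c2 {1..m2} = restrict a2 {1..m2}"
    using head1 head2 by (auto intro: restrict_ext)
  ultimately show ?thesis by (simp add: J_of_rep_def)
qed

lemma SS_cls_if_J_of_rep_eq:
  assumes a1: "bij_betw a1 {1..m1+l} {1..n1}"
    and c1: "c1 \<in> bijs {1..m1+l} {1..n1}" and c2: "c2 \<in> bijs {1..m2+l} {1..n2}"
    and eq: "J_of_rep m1 m2 n1 l (c1, c2) = J_of_rep m1 m2 n1 l (a1, a2)"
  shows "(c1, c2) \<in> SS_cls m1 m2 n1 n2 l (a1, a2)"
proof -
  have r1: "restrict c1 {1..m1} = restrict a1 {1..m1}"
    and r2: "restrict c2 {1..m2} = restrict a2 {1..m2}"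
    and compl: "compl_bij m1 m2 n1 l c1 c2 = compl_bij m1 m2 n1 l a1 a2"
    using eq by (simp_all add: J_of_rep_def)
  have head1: "\<forall>x\<in>{1..m1}. c1 x = a1 x" and head2: "\<forall>x\<in>{1..m2}. c2 x = a2 x"
    using r1 r2 by (metis restrict_apply')+
  have "c1 ` {1..m1} = a1 ` {1..m1}" using head1 by simp
  then have tail_c1: "bij_betw (\<lambda>j. c1 (m1+j)) {1..l} ({1..n1} - a1 ` {1..m1})"
    using bij_betw_tail[OF bijs_bij_betw[OF c1]] by simp
  define \<sigma> where "\<sigma> = restrict (the_inv_into {1..l} (\<lambda>j. c1 (m1+j)) \<circ> (\<lambda>j. a1 (m1+j))) {1..l}"
  have "bij_betw (the_inv_into {1..l} (\<lambda>j. c1 (m1+j)) \<circ> (\<lambda>j. a1 (m1+j))) {1..l} {1..l}"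
    using bij_betw_tail[OF a1] bij_betw_the_inv_into[OF tail_c1] by (rule bij_betw_trans)
  then have \<sigma>: "\<sigma> \<in> bijs {1..l} {1..l}" by (simp add: \<sigma>_def bijs_def)
  have tail1: "c1 (m1 + \<sigma> j) = a1 (m1+j)" if j: "j \<in> {1..l}" for j
  proof -
    have "(\<lambda>j. c1 (m1+j)) (the_inv_into {1..l} (\<lambda>j. c1 (m1+j)) (a1 (m1+j))) = a1 (m1+j)"
      using tail_c1 bij_betw_apply[OF bij_betw_tail[OF a1] j] by (rule f_the_inv_into_f_bij_betw)
    then show ?thesis using j by (simp add: \<sigma>_def)
  qed
  have tail2: "c2 (m2 + \<sigma> j) = a2 (m2+j)" if j: "j \<in> {1..l}" for j
  proof -
    have "\<sigma> j \<in> {1..l}" using \<sigma> j by (auto simp: bijs_def bij_betw_def)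
    then have "c2 (m2 + \<sigma> j) = compl_bij m1 m2 n1 l c1 c2 (c1 (m1 + \<sigma> j))"
      using compl_bij_tail[OF bijs_bij_betw[OF c1]] by simp
    also have "\<dots> = a2 (m2+j)" using tail1[OF j] compl compl_bij_tail[OF a1 j] by simp
    finally show ?thesis .
  qed
  show ?thesis
    unfolding SS_cls_iff using c1 c2 head1 head2 \<sigma> tail1 tail2 by (intro conjI bexI[of _ \<sigma>]) simp_all
qed

lemma SS_cls_iff_J_of_rep_eq:
  assumes "bij_betw a1 {1..m1+l} {1..n1}"
  shows "(c1, c2) \<in> SS_cls m1 m2 n1 n2 l (a1, a2) \<longleftrightarrow>
     c1 \<in> bijs {1..m1+l} {1..n1} \<and> c2 \<in> bijs {1..m2+l} {1..n2} \<and>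
     J_of_rep m1 m2 n1 l (c1, c2) = J_of_rep m1 m2 n1 l (a1, a2)"
  using J_of_rep_eq_if_SS_cls[OF assms] SS_cls_if_J_of_rep_eq[OF assms]
    SS_cls_iff[of c1 c2 m1 m2 n1 n2 l a1 a2] by blast

section \<open>Composition\<close>

lemma J_comp_compl_outer:
  assumes "y \<in> {1..n1} - y1 ` {1..m1}"
  shows "snd (snd (J_comp (k1, k2) (m1, m2) (n1, n2) (x1, x2, x3) (y1, y2, y3))) y = y3 y"
  using assms by (simp add: J_comp_def)

lemma J_comp_compl_inner:
  assumes "inj_on y1 {1..m1}" and "z \<in> {1..m1} - x1 ` {1..k1}"
  shows "snd (snd (J_comp (k1, k2) (m1, m2) (n1, n2) (x1, x2, x3) (y1, y2, y3))) (y1 z) = y2 (x3 z)"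
  using assms by (simp add: J_comp_def the_inv_into_f_f)

lemma J_comp_compl_undefined:
  assumes "y \<notin> ({1..n1} - y1 ` {1..m1}) \<union> y1 ` ({1..m1} - x1 ` {1..k1})"
  shows "snd (snd (J_comp (k1, k2) (m1, m2) (n1, n2) (x1, x2, x3) (y1, y2, y3))) y = undefined"
  using assms by (auto simp: J_comp_def)

lemma tsum_comp_bijs:
  assumes a: "a \<in> bijs {1..k} {1..m}" and b: "b \<in> bijs {1..m+l'} {1..n}"
  shows "restrict (b \<circ> tsum k m a id) {1..k+l'} \<in> bijs {1..k+l'} {1..n}"
proof -
  have "bij_betw (tsum k m a id) {1..k+l'} ({1..m} \<union> (+) m ` {1..l'})"
    using bijs_bij_betw[OF a] by (intro bij_betw_tsum) auto
  moreover have "{1..m} \<union> (+) m ` {1..l'} = {1..m+l'}" by auto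
  ultimately have "bij_betw (b \<circ> tsum k m a id) {1..k+l'} {1..n}"
    using bijs_bij_betw[OF b] by (auto intro: bij_betw_trans)
  then show ?thesis by (simp add: bijs_def)
qed

context
  fixes k1 k2 m1 m2 n1 n2 l l' :: nat and a1 a2 b1 b2 :: "nat \<Rightarrow> nat"
  assumes a1: "bij_betw a1 {1..k1+l} {1..m1}" and a2: "bij_betw a2 {1..k2+l} {1..m2}"
    and b1: "bij_betw b1 {1..m1+l'} {1..n1}" and b2: "bij_betw b2 {1..m2+l'} {1..n2}"
begin

lemma J_comp_J_of_rep_compl_extensional:
  "snd (snd (J_comp (k1, k2) (m1, m2) (n1, n2) (J_of_rep k1 k2 m1 l (a1, a2)) (J_of_rep m1 m2 n1 l' (b1, b2))))
     \<in> extensional ({1..n1} - b1 ` a1 ` {1..k1})"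
proof (unfold extensional_def, intro CollectI allI impI)
  fix y assume y: "y \<notin> {1..n1} - b1 ` a1 ` {1..k1}"
  have "a1 ` {1..k1} \<subseteq> {1..m1}" "b1 ` {1..m1} \<subseteq> {1..n1}"
    using a1 b1 by (auto simp: bij_betw_def)
  moreover from this have "b1 ` ({1..m1} - a1 ` {1..k1}) = b1 ` {1..m1} - b1 ` a1 ` {1..k1}"
    using b1 by (intro inj_on_image_set_diff[of b1 "{1..m1+l'}"]) (auto simp: bij_betw_def)
  ultimately have "y \<notin> ({1..n1} - b1 ` {1..m1}) \<union> b1 ` ({1..m1} - a1 ` {1..k1})"
    using y by auto
  then show "snd (snd (J_comp (k1, k2) (m1, m2) (n1, n2)
      (J_of_rep k1 k2 m1 l (a1, a2)) (J_of_rep m1 m2 n1 l' (b1, b2)))) y = undefined"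
    unfolding J_of_rep_def by (intro J_comp_compl_undefined) simp
qed

lemma J_comp_J_of_rep_compl_inner:
  assumes i: "i \<in> {1..l}"
  shows "snd (snd (J_comp (k1, k2) (m1, m2) (n1, n2) (J_of_rep k1 k2 m1 l (a1, a2))
      (J_of_rep m1 m2 n1 l' (b1, b2)))) (b1 (a1 (k1+i))) = b2 (a2 (k2+i))"
    (is "snd (snd ?comp) _ = _")
proof -
  let ?z = "a1 (k1+i)"
  have z: "?z \<in> {1..m1} - a1 ` {1..k1}" using bij_betw_apply[OF bij_betw_tail[OF a1] i] .
  have "inj_on (restrict b1 {1..m1}) {1..m1}"
    using b1 by (auto simp: bij_betw_def intro: inj_on_subset)
  then have "snd (snd ?comp) (restrict b1 {1..m1} ?z) =
      restrict b2 {1..m2} (compl_bij k1 k2 m1 l a1 a2 ?z)"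
    unfolding J_of_rep_def fst_conv snd_conv by (rule J_comp_compl_inner) (use z in auto)
  moreover have "a2 (k2+i) \<in> {1..m2}" using i by (intro bij_betw_apply[OF a2]) auto
  ultimately show ?thesis using z compl_bij_tail[OF a1 i] by simp
qed

lemma J_comp_J_of_rep_compl_outer:
  assumes j: "j \<in> {1..l'}"
  shows "snd (snd (J_comp (k1, k2) (m1, m2) (n1, n2) (J_of_rep k1 k2 m1 l (a1, a2))
      (J_of_rep m1 m2 n1 l' (b1, b2)))) (b1 (m1+j)) = b2 (m2+j)"
proof -
  have "b1 (m1+j) \<in> {1..n1} - b1 ` {1..m1}" using bij_betw_apply[OF bij_betw_tail[OF b1] j] .
  then show ?thesis
    unfolding J_of_rep_def fst_conv snd_conv
    by (subst J_comp_compl_outer) (simp_all add: compl_bij_tail[OF b1 j])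
qed

end

lemma J_of_rep_comp:
  assumes "a1 \<in> bijs {1..k1+l} {1..m1}" and "a2 \<in> bijs {1..k2+l} {1..m2}"
    and "b1 \<in> bijs {1..m1+l'} {1..n1}" and "b2 \<in> bijs {1..m2+l'} {1..n2}"
  defines "c1 \<equiv> restrict (b1 \<circ> tsum (k1+l) m1 a1 id) {1..k1+l+l'}"
    and "c2 \<equiv> restrict (b2 \<circ> tsum (k2+l) m2 a2 id) {1..k2+l+l'}"
  shows "J_of_rep k1 k2 n1 (l+l') (c1, c2) =
    J_comp (k1, k2) (m1, m2) (n1, n2) (J_of_rep k1 k2 m1 l (a1, a2)) (J_of_rep m1 m2 n1 l' (b1, b2))"
    (is "_ = ?comp")
proof -
  note bij = assms(1-4)[THEN bijs_bij_betw]
  have c1: "bij_betw c1 {1..k1+(l+l')} {1..n1}"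
    using tsum_comp_bijs[OF assms(1,3)] by (simp add: c1_def bijs_def add.assoc)
  have "compl_bij k1 k2 n1 (l+l') c1 c2 = snd (snd ?comp)"
  proof (rule compl_bij_unique[OF c1])
    have "c1 ` {1..k1} = b1 ` a1 ` {1..k1}" by (auto simp: c1_def tsum_def)
    then show "snd (snd ?comp) \<in> extensional ({1..n1} - c1 ` {1..k1})"
      using J_comp_J_of_rep_compl_extensional[OF bij] by simp
    fix j assume j: "j \<in> {1..l+l'}"
    show "snd (snd ?comp) (c1 (k1+j)) = c2 (k2+j)"
    proof (cases "j \<le> l")
      case True
      then show ?thesis
        using J_comp_J_of_rep_compl_inner[OF bij, of j] j by (simp add: c1_def c2_def tsum_def)
    next
      case False
      then obtain j' where "j' \<in> {1..l'}" "j = l + j'" using j by (intro that[of "j - l"]) auto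
      then show ?thesis
        using J_comp_J_of_rep_compl_outer[OF bij, of j'] by (simp add: c1_def c2_def tsum_def)
    qed
  qed
  moreover have "restrict c1 {1..k1} = restrict (restrict b1 {1..m1} \<circ> restrict a1 {1..k1}) {1..k1}"
    using bij_betw_apply[OF bij(1)] by (auto simp: c1_def tsum_def intro!: restrict_ext)
  moreover have "restrict c2 {1..k2} = restrict (restrict b2 {1..m2} \<circ> restrict a2 {1..k2}) {1..k2}"
    using bij_betw_apply[OF bij(2)] by (auto simp: c2_def tsum_def intro!: restrict_ext)
  ultimately show ?thesis by (simp add: J_of_rep_def J_comp_def)
qed

section \<open>The functor from \<Sigma>\<inverse>\<Sigma> to J\<close>

lemma SS_cls_eq_if_J_of_rep_eq:
  assumes a1: "a1 \<in> bijs {1..m1+l} {1..n1}" and b1: "b1 \<in> bijs {1..m1+l} {1..n1}"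
    and eq: "J_of_rep m1 m2 n1 l (a1, a2) = J_of_rep m1 m2 n1 l (b1, b2)"
  shows "SS_cls m1 m2 n1 n2 l (a1, a2) = SS_cls m1 m2 n1 n2 l (b1, b2)"
proof (rule set_eqI)
  fix c :: "(nat \<Rightarrow> nat) \<times> (nat \<Rightarrow> nat)"
  show "c \<in> SS_cls m1 m2 n1 n2 l (a1, a2) \<longleftrightarrow> c \<in> SS_cls m1 m2 n1 n2 l (b1, b2)"
    using SS_cls_iff_J_of_rep_eq[OF bijs_bij_betw[OF a1]] SS_cls_iff_J_of_rep_eq[OF bijs_bij_betw[OF b1]] eq
    by (cases c) simp
qed

lemma SS_cls_some:
  assumes a1: "a1 \<in> bijs {1..m1+l} {1..n1}" and a2: "a2 \<in> bijs {1..m2+l} {1..n2}"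
  obtains c1 c2 where "(SOME c. c \<in> SS_cls m1 m2 n1 n2 l (a1, a2)) = (c1, c2)"
    "c1 \<in> bijs {1..m1+l} {1..n1}" "c2 \<in> bijs {1..m2+l} {1..n2}"
    "J_of_rep m1 m2 n1 l (c1, c2) = J_of_rep m1 m2 n1 l (a1, a2)"
proof -
  note cls_iff = SS_cls_iff_J_of_rep_eq[OF bijs_bij_betw[OF a1]]
  have "(a1, a2) \<in> SS_cls m1 m2 n1 n2 l (a1, a2)" using cls_iff a1 a2 by simp
  then have "(SOME c. c \<in> SS_cls m1 m2 n1 n2 l (a1, a2)) \<in> SS_cls m1 m2 n1 n2 l (a1, a2)"
    by (rule someI)
  then show ?thesis using that cls_iff by (cases "SOME c. c \<in> SS_cls m1 m2 n1 n2 l (a1, a2)") auto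
qed

lemma SS_homE:
  assumes "f \<in> SS_hom (m1, m2) (n1, n2)"
  obtains l a1 a2 where "f = (l, SS_cls m1 m2 n1 n2 l (a1, a2))"
    "a1 \<in> bijs {1..m1+l} {1..n1}" "a2 \<in> bijs {1..m2+l} {1..n2}"
  using assms unfolding SS_hom_def by auto

lemma SS_homI:
  "a1 \<in> bijs {1..m1+l} {1..n1} \<Longrightarrow> a2 \<in> bijs {1..m2+l} {1..n2} \<Longrightarrow>
   (l, SS_cls m1 m2 n1 n2 l (a1, a2)) \<in> SS_hom (m1, m2) (n1, n2)"
  unfolding SS_hom_def by blast

definition SS_to_J :: "nat \<times> nat \<Rightarrow> nat \<times> nat \<Rightarrow> SS_mor \<Rightarrow> J_mor" where
  "SS_to_J x y f = J_of_rep (fst x) (snd x) (fst y) (fst f) (SOME a. a \<in> snd f)"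

lemma SS_to_J_cls:
  assumes "a1 \<in> bijs {1..m1+l} {1..n1}" and "a2 \<in> bijs {1..m2+l} {1..n2}"
  shows "SS_to_J (m1, m2) (n1, n2) (l, SS_cls m1 m2 n1 n2 l (a1, a2)) = J_of_rep m1 m2 n1 l (a1, a2)"
  using assms by (rule SS_cls_some) (simp add: SS_to_J_def)

lemma SS_comp_obtain_rep:
  assumes f: "f \<in> SS_hom (k1, k2) (m1, m2)" and g: "g \<in> SS_hom (m1, m2) (n1, n2)"
  obtains L c1 c2 where
    "SS_comp (k1, k2) (m1, m2) (n1, n2) f g = (L, SS_cls k1 k2 n1 n2 L (c1, c2))"
    "c1 \<in> bijs {1..k1+L} {1..n1}" "c2 \<in> bijs {1..k2+L} {1..n2}"
    "J_of_rep k1 k2 n1 L (c1, c2) =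
       J_comp (k1, k2) (m1, m2) (n1, n2) (SS_to_J (k1, k2) (m1, m2) f) (SS_to_J (m1, m2) (n1, n2) g)"
proof -
  obtain l a1 a2 where f_eq: "f = (l, SS_cls k1 k2 m1 m2 l (a1, a2))"
    and a: "a1 \<in> bijs {1..k1+l} {1..m1}" "a2 \<in> bijs {1..k2+l} {1..m2}"
    using f by (rule SS_homE)
  obtain l' b1 b2 where g_eq: "g = (l', SS_cls m1 m2 n1 n2 l' (b1, b2))"
    and b: "b1 \<in> bijs {1..m1+l'} {1..n1}" "b2 \<in> bijs {1..m2+l'} {1..n2}"
    using g by (rule SS_homE)
  obtain x1 x2 where x: "(SOME c. c \<in> SS_cls k1 k2 m1 m2 l (a1, a2)) = (x1, x2)"
    and x1: "x1 \<in> bijs {1..k1+l} {1..m1}" and x2: "x2 \<in> bijs {1..k2+l} {1..m2}"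
    and Jx: "J_of_rep k1 k2 m1 l (x1, x2) = J_of_rep k1 k2 m1 l (a1, a2)"
    using a by (rule SS_cls_some)
  obtain y1 y2 where y: "(SOME c. c \<in> SS_cls m1 m2 n1 n2 l' (b1, b2)) = (y1, y2)"
    and y1: "y1 \<in> bijs {1..m1+l'} {1..n1}" and y2: "y2 \<in> bijs {1..m2+l'} {1..n2}"
    and Jy: "J_of_rep m1 m2 n1 l' (y1, y2) = J_of_rep m1 m2 n1 l' (b1, b2)"
    using b by (rule SS_cls_some)
  show ?thesis
  proof (rule that)
    show "SS_comp (k1, k2) (m1, m2) (n1, n2) f g =
      (l+l', SS_cls k1 k2 n1 n2 (l+l') (restrict (y1 \<circ> tsum (k1+l) m1 x1 id) {1..k1+l+l'},
        restrict (y2 \<circ> tsum (k2+l) m2 x2 id) {1..k2+l+l'}))"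
      by (simp add: SS_comp_def f_eq g_eq x y)
    show "restrict (y1 \<circ> tsum (k1+l) m1 x1 id) {1..k1+l+l'} \<in> bijs {1..k1+(l+l')} {1..n1}"
      "restrict (y2 \<circ> tsum (k2+l) m2 x2 id) {1..k2+l+l'} \<in> bijs {1..k2+(l+l')} {1..n2}"
      using tsum_comp_bijs[OF x1 y1] tsum_comp_bijs[OF x2 y2] by (simp_all add: add.assoc)
    show "J_of_rep k1 k2 n1 (l+l') (restrict (y1 \<circ> tsum (k1+l) m1 x1 id) {1..k1+l+l'},
        restrict (y2 \<circ> tsum (k2+l) m2 x2 id) {1..k2+l+l'}) =
      J_comp (k1, k2) (m1, m2) (n1, n2) (SS_to_J (k1, k2) (m1, m2) f) (SS_to_J (m1, m2) (n1, n2) g)"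
      using J_of_rep_comp[OF x1 x2 y1 y2] Jx Jy by (simp add: f_eq g_eq SS_to_J_cls[OF a] SS_to_J_cls[OF b])
  qed
qed

lemma SS_comp_in_SS_hom: "f \<in> SS_hom x y \<Longrightarrow> g \<in> SS_hom y z \<Longrightarrow> SS_comp x y z f g \<in> SS_hom x z"
  by (cases x, cases y, cases z) (metis SS_comp_obtain_rep SS_homI)

lemma SS_to_J_comp:
  "f \<in> SS_hom x y \<Longrightarrow> g \<in> SS_hom y z \<Longrightarrow>
   SS_to_J x z (SS_comp x y z f g) = J_comp x y z (SS_to_J x y f) (SS_to_J y z g)"
  by (cases x, cases y, cases z) (metis SS_comp_obtain_rep SS_to_J_cls)

lemma SS_to_J_in_J_hom: "f \<in> SS_hom x y \<Longrightarrow> SS_to_J x y f \<in> J_hom x y"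
  by (cases x, cases y) (auto elim!: SS_homE simp: SS_to_J_cls J_of_rep_in_J_hom)

lemma bij_betw_SS_to_J: "bij_betw (SS_to_J x y) (SS_hom x y) (J_hom x y)"
proof -
  obtain m1 m2 n1 n2 where xy: "x = (m1, m2)" "y = (n1, n2)" by fastforce
  have "inj_on (SS_to_J x y) (SS_hom x y)"
  proof (rule inj_onI)
    fix f g assume "f \<in> SS_hom x y" "g \<in> SS_hom x y" and eq: "SS_to_J x y f = SS_to_J x y g"
    then obtain l a1 a2 l' b1 b2 where f: "f = (l, SS_cls m1 m2 n1 n2 l (a1, a2))"
      and a: "a1 \<in> bijs {1..m1+l} {1..n1}" "a2 \<in> bijs {1..m2+l} {1..n2}"
      and g: "g = (l', SS_cls m1 m2 n1 n2 l' (b1, b2))"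
      and b: "b1 \<in> bijs {1..m1+l'} {1..n1}" "b2 \<in> bijs {1..m2+l'} {1..n2}"
      unfolding xy by (metis SS_homE)
    have "l = l'" using bijs_same_card[OF a(1)] bijs_same_card[OF b(1)] by simp
    moreover have "J_of_rep m1 m2 n1 l (a1, a2) = J_of_rep m1 m2 n1 l' (b1, b2)"
      using eq by (simp add: f g xy SS_to_J_cls[OF a] SS_to_J_cls[OF b])
    ultimately show "f = g" using SS_cls_eq_if_J_of_rep_eq[OF a(1)] b(1) by (simp add: f g)
  qed
  moreover have "J_hom x y \<subseteq> SS_to_J x y ` SS_hom x y"
  proof
    fix h assume "h \<in> J_hom x y"
    then obtain l a1 a2 where "a1 \<in> bijs {1..m1+l} {1..n1}" "a2 \<in> bijs {1..m2+l} {1..n2}"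
      "h = J_of_rep m1 m2 n1 l (a1, a2)" unfolding xy by (rule J_hom_obtain_rep)
    then show "h \<in> SS_to_J x y ` SS_hom x y"
      unfolding xy by (metis SS_homI SS_to_J_cls image_eqI)
  qed
  moreover have "SS_to_J x y ` SS_hom x y \<subseteq> J_hom x y" using SS_to_J_in_J_hom by blast
  ultimately show ?thesis by (auto simp: bij_betw_def)
qed

lemma SS_id_in_SS_hom: "SS_id x \<in> SS_hom x x"
  using SS_homI[OF restrict_id_bijs restrict_id_bijs, where l = 0] by (cases x) (simp add: SS_id_def)

lemma SS_to_J_id: "SS_to_J x x (SS_id x) = J_id x"
proof (cases x)
  case (Pair n1 n2)
  have "compl_bij n1 n2 n1 0 (restrict id {1..n1}) (restrict id {1..n2}) = restrict id {}"
    by (auto simp: compl_bij_def)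
  then show ?thesis
    using SS_to_J_cls[OF restrict_id_bijs restrict_id_bijs, where l = 0]
    by (simp add: Pair SS_id_def J_id_def J_of_rep_def)
qed

lemma is_functor_SS_to_J: "is_functor SS_cat J_cat (\<lambda>x. x) SS_to_J"
  unfolding is_functor_def SS_cat_def J_cat_def
  using SS_to_J_in_J_hom SS_to_J_id SS_to_J_comp by simp

theorem proposition4p3:
  shows "cat_isomorphic J_cat SS_cat"
proof (rule cat_isomorphicI_bij_on_homs[OF is_functor_SS_to_J])
  show "Ob J_cat = Ob SS_cat" by (simp add: J_cat_def SS_cat_def)
  show "bij_betw (SS_to_J x y) (Hom SS_cat x y) (Hom J_cat x y)" for x y
    using bij_betw_SS_to_J by (simp add: J_cat_def SS_cat_def)
  show "Comp SS_cat x y z f g \<in> Hom SS_cat x z" if "f \<in> Hom SS_cat x y" "g \<in> Hom SS_cat y z" for x y z f g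
    using that SS_comp_in_SS_hom by (simp add: SS_cat_def)
  show "Id SS_cat x \<in> Hom SS_cat x x" for x
    using SS_id_in_SS_hom by (simp add: SS_cat_def)
qed

end
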